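(* Let $(M,g,S)$, $p$, $u$, $\varphi$, $\alpha_1$ and $e_1,e_2,e_3$ be as in the context. Give each $v\in\alpha_1$ coordinates $(x,y,z)$ by $v=xe_1+ye_2+ze_3$. For $a\in\mathbb R$, the sphere $s_1=\{v\in\alpha_1:\tilde g(v,v)=a\}$ has the equation $$2(\cos\varphi)(x^2-y^2+z^2)+2\sqrt{1-2\cos^2\varphi}\,(xy+yz)=a.$$
   Context: $M$ is a 4-dimensional differentiable manifold with a positive definite metric $g$ and a tensor field $S$ of type $(1,1)$ whose components in some local coordinate system form the matrix with rows $(0,1,0,0)$, $(0,0,1,0)$, $(0,0,0,1)$, $(-1,0,0,0)$; hence $S^4=-\mathrm{id}$, and $g(Su,Sv)=g(u,v)$ for all vector fields $u,v$. The associated metric is $\tilde g(u,v)=g(u,Sv)+g(Su,v)$. Here $p\in M$, $u\in T_pM$ is a $g$-unit vector such that $\{u,Su,S^2u,S^3u\}$ is a basis of $T_pM$, $\varphi=\angle(u,Su)$ (so $\cos\varphi=g(u,Su)$; it is known that $\frac{\pi}{4}<\varphi<\frac{3\pi}{4}$), $\alpha_1=\mathrm{span}\{u,Su,S^2u\}$, and $e_1=u$, $e_2=\frac{(-\cos\varphi)u+Su-(\cos\varphi)S^2u}{\sqrt{1-2\cos^2\varphi}}$, $e_3=S^2u$ (a $g$-orthonormal basis of $\alpha_1$). *)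

theory Defs
  imports "HOL-Analysis.Analysis"
begin

text \<open>Pointwise model: T_pM is identified with real^4 via the coordinate basis of the
local chart in which S has the given component matrix.\<close>

definition Smat :: "real^4^4" where
  "Smat = (\<chi> i j. if (i = 1 \<and> j = 2) \<or> (i = 2 \<and> j = 3) \<or> (i = 3 \<and> j = 4) then 1
                   else if i = 4 \<and> j = 1 then -1 else 0)"

definition Sop :: "real^4 \<Rightarrow> real^4" where
  "Sop v = Smat *v v"

definition gmet :: "real^4^4 \<Rightarrow> real^4 \<Rightarrow> real^4 \<Rightarrow> real" where
  "gmet G u v = u \<bullet> (G *v v)"

definition gtil :: "real^4^4 \<Rightarrow> real^4 \<Rightarrow> real^4 \<Rightarrow> real" where
  "gtil G u v = gmet G u (Sop v) + gmet G (Sop u) v"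

end

theory Submission imports Defs begin

(* Since S is a g-isometry with S^4 = -id, the value g(S^i u, S^j u) depends only on
   j - i mod 4, and antisymmetry under a shift by 2 forces g(u, S^2 u) = 0 and
   g(u, S^3 u) = -cos phi.  This determines g and g~ = 2 g(-, S -) on alpha_1 in the
   frame u, Su, S^2 u.  Positivity of g on c u - Su + c S^2 u (c = cos phi) gives
   1 - 2c^2 > 0, so e_2 is well defined, and the change of frame to e_1, e_2, e_3 turns
   g~(v, v) into the stated quadratic form. *)

lemma Sop_add [simp]: "Sop (v + w) = Sop v + Sop w"
  unfolding Sop_def by (simp add: matrix_vector_right_distrib)

lemma Sop_scaleR [simp]: "Sop (r *\<^sub>R v) = r *\<^sub>R Sop v"
  unfolding Sop_def by (simp add: matrix_vector_mult_scaleR)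

lemma Sop_power4: "Sop (Sop (Sop (Sop v))) = - v"
  unfolding Sop_def Smat_def by (simp add: vec_eq_iff forall_4 matrix_vector_mult_def sum_4)

lemma gmet_add_left [simp]: "gmet G (v + w) x = gmet G v x + gmet G w x"
  unfolding gmet_def by (simp add: inner_add_left)

lemma gmet_add_right [simp]: "gmet G x (v + w) = gmet G x v + gmet G x w"
  unfolding gmet_def by (simp add: matrix_vector_right_distrib inner_add_right)

lemma gmet_scaleR_left [simp]: "gmet G (r *\<^sub>R v) x = r * gmet G v x"
  unfolding gmet_def by simp

lemma gmet_scaleR_right [simp]: "gmet G x (r *\<^sub>R v) = r * gmet G x v"
  unfolding gmet_def by (simp add: matrix_vector_mult_scaleR)

lemma gmet_minus_right [simp]: "gmet G x (- v) = - gmet G x v"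
  using gmet_scaleR_right[of G x "-1" v] by simp

lemma gmet_commute: "transpose G = G \<Longrightarrow> gmet G v w = gmet G w v"
  unfolding gmet_def by (metis dot_lmul_matrix vector_transpose_matrix inner_commute)

lemma gtil_self: "transpose G = G \<Longrightarrow> gtil G v v = 2 * gmet G v (Sop v)"
  unfolding gtil_def using gmet_commute by simp

lemma frame_change_identity:
  fixes c s x y z :: real
  assumes "s > 0" "s\<^sup>2 = 1 - 2 * c\<^sup>2"
  defines "A \<equiv> x - y * c / s" and "B \<equiv> y / s" and "C \<equiv> z - y * c / s"
  shows "(A\<^sup>2 + B\<^sup>2 + C\<^sup>2) * c + B * (A + C) = c * (x\<^sup>2 - y\<^sup>2 + z\<^sup>2) + s * (x * y + y * z)"
proof -
  have "(A\<^sup>2 + B\<^sup>2 + C\<^sup>2) * c + B * (A + C)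
      = c * (x\<^sup>2 + z\<^sup>2) + y * (x + z) * (1 - 2 * c\<^sup>2) / s - c * y\<^sup>2 * (1 - 2 * c\<^sup>2) / s\<^sup>2"
    unfolding A_def B_def C_def using assms(1)
    by (simp add: field_simps power2_eq_square)
  also have "\<dots> = c * (x\<^sup>2 - y\<^sup>2 + z\<^sup>2) + s * (x * y + y * z)"
    unfolding assms(2)[symmetric] using assms(1) by (simp add: power2_eq_square field_simps)
  finally show ?thesis .
qed

locale Sop_isometry =
  fixes G :: "real^4^4"
  assumes symmetric: "transpose G = G"
    and isometric: "gmet G (Sop v) (Sop w) = gmet G v w"
begin

lemma gmet_Sop2_self: "gmet G u (Sop (Sop u)) = 0"
proof -
  have "gmet G u (Sop (Sop u)) = gmet G (Sop (Sop u)) (Sop (Sop (Sop (Sop u))))"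
    by (simp add: isometric)
  also have "\<dots> = - gmet G u (Sop (Sop u))"
    by (simp add: Sop_power4 gmet_commute[OF symmetric])
  finally show ?thesis by simp
qed

lemma gmet_Sop3_self: "gmet G u (Sop (Sop (Sop u))) = - gmet G u (Sop u)"
proof -
  have "gmet G u (Sop (Sop (Sop u))) = gmet G (Sop u) (Sop (Sop (Sop (Sop u))))"
    by (simp add: isometric)
  also have "\<dots> = - gmet G u (Sop u)"
    by (simp add: Sop_power4 gmet_commute[OF symmetric])
  finally show ?thesis .
qed

lemma gmet_Sop_shift:
  "gmet G (Sop u) (Sop u) = gmet G u u"
  "gmet G (Sop (Sop u)) (Sop (Sop u)) = gmet G u u"
  "gmet G (Sop u) (Sop (Sop u)) = gmet G u (Sop u)"
  "gmet G (Sop (Sop u)) (Sop (Sop (Sop u))) = gmet G u (Sop u)"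
  "gmet G (Sop u) (Sop (Sop (Sop u))) = 0"
  using gmet_Sop2_self[of "Sop u"] by (simp_all add: isometric)

lemma gmet_span3_self:
  fixes u :: "real^4" and A B C :: real
  defines "v \<equiv> A *\<^sub>R u + B *\<^sub>R Sop u + C *\<^sub>R Sop (Sop u)"
  shows "gmet G v v = (A\<^sup>2 + B\<^sup>2 + C\<^sup>2) * gmet G u u + 2 * (A * B + B * C) * gmet G u (Sop u)"
  unfolding v_def
  by (simp add: gmet_Sop_shift gmet_Sop2_self gmet_commute[OF symmetric, of "Sop _" u]
      gmet_commute[OF symmetric, of "Sop (Sop _)"] power2_eq_square algebra_simps)

lemma gtil_span3_self:
  fixes u :: "real^4" and A B C :: real
  defines "v \<equiv> A *\<^sub>R u + B *\<^sub>R Sop u + C *\<^sub>R Sop (Sop u)"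
  shows "gtil G v v = 2 * ((A\<^sup>2 + B\<^sup>2 + C\<^sup>2) * gmet G u (Sop u) + B * (A + C) * gmet G u u)"
  unfolding gtil_self[OF symmetric] v_def
  by (simp add: gmet_Sop_shift gmet_Sop2_self gmet_Sop3_self
      gmet_commute[OF symmetric, of "Sop _" u] gmet_commute[OF symmetric, of "Sop (Sop _)"]
      power2_eq_square algebra_simps)

lemma gmet_Sop_self_sq_lt_half:
  assumes pos_def: "\<And>v. v \<noteq> 0 \<Longrightarrow> gmet G v v > 0"
    and unit: "gmet G u u = 1"
    and indep: "independent {u, Sop u, Sop (Sop u)}"
    and distinct: "Sop u \<noteq> u" "Sop u \<noteq> Sop (Sop u)"
  shows "2 * (gmet G u (Sop u))\<^sup>2 < 1"
proof -
  define c where "c = gmet G u (Sop u)"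
  define w where "w = c *\<^sub>R u + (- 1) *\<^sub>R Sop u + c *\<^sub>R Sop (Sop u)"
  have "w \<noteq> 0"
  proof
    assume "w = 0"
    then have "Sop u = c *\<^sub>R u + c *\<^sub>R Sop (Sop u)"
      unfolding w_def by (simp add: algebra_simps)
    also have "\<dots> \<in> span ({u, Sop u, Sop (Sop u)} - {Sop u})"
      using distinct by (intro span_add span_scale span_base) auto
    finally have "dependent {u, Sop u, Sop (Sop u)}"
      unfolding dependent_def by blast
    with indep show False by simp
  qed
  then have "gmet G w w > 0" by (rule pos_def)
  moreover have "gmet G w w = 1 - 2 * c\<^sup>2"
    unfolding w_def gmet_span3_self unit c_def by (simp add: power2_eq_square)
  ultimately show ?thesis unfolding c_def by simp
qed

lemma gtil_frame_coordinates:
  fixes u :: "real^4" and x y z :: real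
  defines "c \<equiv> gmet G u (Sop u)"
  defines "s \<equiv> sqrt (1 - 2 * c\<^sup>2)"
  defines "v \<equiv> x *\<^sub>R u + y *\<^sub>R ((1 / s) *\<^sub>R ((- c) *\<^sub>R u + Sop u - c *\<^sub>R Sop (Sop u)))
                + z *\<^sub>R Sop (Sop u)"
  assumes unit: "gmet G u u = 1" and bound: "2 * c\<^sup>2 < 1"
  shows "gtil G v v = 2 * c * (x\<^sup>2 - y\<^sup>2 + z\<^sup>2) + 2 * s * (x * y + y * z)"
proof -
  have s_pos: "s > 0" and s_sq: "s\<^sup>2 = 1 - 2 * c\<^sup>2"
    using bound unfolding s_def by simp_all
  have "v = (x - y * c / s) *\<^sub>R u + (y / s) *\<^sub>R Sop u + (z - y * c / s) *\<^sub>R Sop (Sop u)"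
    unfolding v_def by (simp add: algebra_simps)
  then have "gtil G v v = 2 * (((x - y * c / s)\<^sup>2 + (y / s)\<^sup>2 + (z - y * c / s)\<^sup>2) * c
                            + y / s * ((x - y * c / s) + (z - y * c / s)))"
    by (simp only: gtil_span3_self unit c_def[symmetric] mult_1_right)
  also have "\<dots> = 2 * (c * (x\<^sup>2 - y\<^sup>2 + z\<^sup>2) + s * (x * y + y * z))"
    by (simp only: frame_change_identity[OF s_pos s_sq])
  finally show ?thesis by (simp only: distrib_left mult.assoc)
qed

end

theorem theorem4p2:
  fixes G :: "real^4^4" and u e1 e2 e3 :: "real^4" and \<phi> a :: real
  assumes G_sym: "transpose G = G"
    and G_pos: "\<forall>v. v \<noteq> 0 \<longrightarrow> gmet G v v > 0"
    and S_isom: "\<forall>v w. gmet G (Sop v) (Sop w) = gmet G v w"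
    and u_unit: "gmet G u u = 1"
    and u_basis: "independent {u, Sop u, Sop (Sop u), Sop (Sop (Sop u))}"
      "span {u, Sop u, Sop (Sop u), Sop (Sop (Sop u))} = UNIV"
      "card {u, Sop u, Sop (Sop u), Sop (Sop (Sop u))} = 4"
    and phi_def: "\<phi> = arccos (gmet G u (Sop u))"
    and e1_def: "e1 = u"
    and e2_def: "e2 = (1 / sqrt (1 - 2 * (cos \<phi>)\<^sup>2)) *\<^sub>R
                      ((- cos \<phi>) *\<^sub>R u + Sop u - (cos \<phi>) *\<^sub>R Sop (Sop u))"
    and e3_def: "e3 = Sop (Sop u)"
  shows "\<forall>x y z. (x *\<^sub>R e1 + y *\<^sub>R e2 + z *\<^sub>R e3
                   \<in> {v \<in> span {u, Sop u, Sop (Sop u)}. gtil G v v = a})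
            \<longleftrightarrow> 2 * cos \<phi> * (x\<^sup>2 - y\<^sup>2 + z\<^sup>2)
                + 2 * sqrt (1 - 2 * (cos \<phi>)\<^sup>2) * (x * y + y * z) = a"
proof (intro allI)
  fix x y z
  interpret Sop_isometry G using G_sym S_isom by unfold_locales auto
  have "independent {u, Sop u, Sop (Sop u)}"
    using u_basis(1) by (rule independent_mono) auto
  moreover have "Sop u \<noteq> u" "Sop u \<noteq> Sop (Sop u)"
    using u_basis(3) by (auto simp: card_insert_if split: if_splits)
  ultimately have bound: "2 * (gmet G u (Sop u))\<^sup>2 < 1"
    using gmet_Sop_self_sq_lt_half G_pos u_unit by blast
  then have "\<bar>gmet G u (Sop u)\<bar> < 1"
    by (simp flip: abs_square_less_1)
  then have "cos \<phi> = gmet G u (Sop u)"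
    unfolding phi_def by (intro cos_arccos) auto
  moreover have "x *\<^sub>R e1 + y *\<^sub>R e2 + z *\<^sub>R e3 \<in> span {u, Sop u, Sop (Sop u)}"
    unfolding e1_def e2_def e3_def by (intro span_add span_scale span_diff span_base) auto
  ultimately show "(x *\<^sub>R e1 + y *\<^sub>R e2 + z *\<^sub>R e3
                   \<in> {v \<in> span {u, Sop u, Sop (Sop u)}. gtil G v v = a})
            \<longleftrightarrow> 2 * cos \<phi> * (x\<^sup>2 - y\<^sup>2 + z\<^sup>2)
                + 2 * sqrt (1 - 2 * (cos \<phi>)\<^sup>2) * (x * y + y * z) = a"
    using gtil_frame_coordinates[OF u_unit bound, of x y z] by (simp add: e1_def e2_def e3_def)
qed

end
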